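(* Let $T$ be a split Leibniz triple system with symmetric root system $\Lambda^1$, suppose $\Lambda^0$ is symmetric, and fix $\alpha_0\in\Lambda^1$. Let $\alpha_1,\alpha_2,\alpha_3\in\Lambda^1_{\alpha_0}\cup\{0\}$ with $\alpha_1+\alpha_2+\alpha_3=0$ and let $\bar\epsilon\in\Lambda^1\setminus\Lambda^1_{\alpha_0}$. Then, with brackets computed in the standard embedding $L$: (1) $[\{T_{\alpha_1},T_{\alpha_2},T_{\alpha_3}\},T_{\bar\epsilon}]=0$; (2) if $\bar\epsilon\in\Lambda^0$, then $[\{T_{\alpha_1},T_{\alpha_2},T_{\alpha_3}\},L^0_{\bar\epsilon}]=0$; (3) $[[\{T_{\alpha_1},T_{\alpha_2},T_{\alpha_3}\},T_0],T_{\bar\epsilon}]=0$.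
   Context: A Leibniz triple system is a vector space $T$ over a field $\mathbb{K}$ with a trilinear product $\{\cdot,\cdot,\cdot\}$ satisfying, for all $a,b,c,d,e\in T$: $\{a,\{b,c,d\},e\}=\{\{a,b,c\},d,e\}-\{\{a,c,b\},d,e\}-\{\{a,d,b\},c,e\}+\{\{a,d,c\},b,e\}$ and $\{a,b,\{c,d,e\}\}=\{\{a,b,c\},d,e\}-\{\{a,b,d\},c,e\}-\{\{a,b,e\},c,d\}+\{\{a,b,e\},d,c\}$. Its standard embedding is the right Leibniz algebra $L=L^0\oplus L^1$ ($L^0$ the span of symbols $x\otimes y$, $L^1=T$) with product $[(x\otimes y,z),(u\otimes v,w)]=(\{x,y,u\}\otimes v-\{x,y,v\}\otimes u+z\otimes w,\ \{x,y,w\}+\{z,u,v\}-\{z,v,u\})$; so $[x,y]=x\otimes y$ and $\{x,y,z\}=[[x,y],z]$ for $x,y,z\in T$. Let $H^0$ be a maximal abelian subalgebra of $L^0$; for $\alpha\in(H^0)^*$ put $T_\alpha=\{t\in T:[t,h]=\alpha(h)t\ \forall h\in H^0\}$, $L^0_\alpha=\{v\in L^0:[v,h]=\alpha(h)v\ \forall h\in H^0\}$, $\Lambda^1=\{\alpha\neq0:T_\alpha\neq0\}$, $\Lambda^0=\{\alpha\neq0:L^0_\alpha\neq0\}$. $T$ is split (w.r.t. $H^0$) if $T=T_0\oplus\bigoplus_{\alpha\in\Lambda^1}T_\alpha$, $\{T_0,T_0,T_0\}=0$ and $\{T_\alpha,T_{-\alpha},T_0\}=0$ for all $\alpha\in\Lambda^1$.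 A set $\Lambda\subset(H^0)^*$ is symmetric if $\alpha\in\Lambda$ implies $-\alpha\in\Lambda$. Two roots $\alpha,\beta\in\Lambda^1$ are connected if there is a family $\alpha_1,\dots,\alpha_{2n+1}\in\Lambda^1\cup\{0\}$ with: $\alpha_1+\dots+\alpha_{2k+1}\in\Lambda^1$ for $k=0,\dots,n$; $\alpha_1+\dots+\alpha_{2k}\in\Lambda^0$ for $k=1,\dots,n$; $\alpha_1=\alpha$ and $\alpha_1+\dots+\alpha_{2n+1}\in\{\beta,-\beta\}$. $\Lambda^1_{\alpha_0}$ denotes the set of $\beta\in\Lambda^1$ connected with $\alpha_0$. *)

theory Defs
  imports Main "HOL.Vector_Spaces"
begin

definition leibniz_triple_system ::
  "('k::field \<Rightarrow> 'v::ab_group_add \<Rightarrow> 'v) \<Rightarrow> ('v \<Rightarrow> 'v \<Rightarrow> 'v \<Rightarrow> 'v) \<Rightarrow> bool" where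
  "leibniz_triple_system scale trip \<longleftrightarrow>
     vector_space scale \<and>
     (\<forall>b c. Vector_Spaces.linear scale scale (\<lambda>a. trip a b c)) \<and>
     (\<forall>a c. Vector_Spaces.linear scale scale (\<lambda>b. trip a b c)) \<and>
     (\<forall>a b. Vector_Spaces.linear scale scale (\<lambda>c. trip a b c)) \<and>
     (\<forall>a b c d e. trip a (trip b c d) e =
        trip (trip a b c) d e - trip (trip a c b) d e - trip (trip a d b) c e + trip (trip a d c) b e) \<and>
     (\<forall>a b c d e. trip a b (trip c d e) =
        trip (trip a b c) d e - trip (trip a b d) c e - trip (trip a b e) c d + trip (trip a b e) d c)"

text \<open>An element of L^0 is a finite sum of symbols x \<otimes> y, written as a list of pairs
  (scalars are absorbed into the first factor). Two formal sums are identified iff they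
  act identically on T = L^1 from the left (w \<mapsto> [x\<otimes>y, w] = {x,y,w}) and from the
  right (z \<mapsto> [z, x\<otimes>y] = {z,x,y} - {z,y,x}). Thus L^0 is realised as the image of
  these formal sums under the map l0_img into pairs of maps T \<Rightarrow> T.\<close>

type_synonym 'v L0elem = "('v \<Rightarrow> 'v) \<times> ('v \<Rightarrow> 'v)"

definition l0_img :: "('v::ab_group_add \<Rightarrow> 'v \<Rightarrow> 'v \<Rightarrow> 'v) \<Rightarrow> ('v \<times> 'v) list \<Rightarrow> 'v L0elem" where
  "l0_img trip xs =
     ((\<lambda>w. sum_list (map (\<lambda>(x, y). trip x y w) xs)),
      (\<lambda>z. sum_list (map (\<lambda>(x, y). trip z x y - trip z y x) xs)))"

definition L0 :: "('v::ab_group_add \<Rightarrow> 'v \<Rightarrow> 'v \<Rightarrow> 'v) \<Rightarrow> 'v L0elem set" where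
  "L0 trip = range (l0_img trip)"

definition l0_zero :: "'v::ab_group_add L0elem" where
  "l0_zero = ((\<lambda>_. 0), (\<lambda>_. 0))"

definition l0_add :: "'v::ab_group_add L0elem \<Rightarrow> 'v L0elem \<Rightarrow> 'v L0elem" where
  "l0_add D E = ((\<lambda>w. fst D w + fst E w), (\<lambda>z. snd D z + snd E z))"

definition l0_scale :: "('k \<Rightarrow> 'v \<Rightarrow> 'v) \<Rightarrow> 'k \<Rightarrow> 'v L0elem \<Rightarrow> 'v L0elem" where
  "l0_scale scale a D = ((\<lambda>w. scale a (fst D w)), (\<lambda>z. scale a (snd D z)))"

text \<open>Product of formal sums in L^0:
  [x\<otimes>y, u\<otimes>v] = {x,y,u}\<otimes>v - {x,y,v}\<otimes>u.\<close>

definition brk_rep :: "('v::ab_group_add \<Rightarrow> 'v \<Rightarrow> 'v \<Rightarrow> 'v) \<Rightarrow> ('v \<times> 'v) list \<Rightarrow> ('v \<times> 'v) list \<Rightarrow> ('v \<times> 'v) list" where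
  "brk_rep trip xs ys =
     concat (map (\<lambda>(x, y). concat (map (\<lambda>(u, v). [(trip x y u, v), (- trip x y v, u)]) ys)) xs)"

definition br_L0L0 :: "('v::ab_group_add \<Rightarrow> 'v \<Rightarrow> 'v \<Rightarrow> 'v) \<Rightarrow> 'v L0elem \<Rightarrow> 'v L0elem \<Rightarrow> 'v L0elem" where
  "br_L0L0 trip D E =
     l0_img trip (brk_rep trip (SOME xs. l0_img trip xs = D) (SOME ys. l0_img trip ys = E))"

definition br_TT :: "('v::ab_group_add \<Rightarrow> 'v \<Rightarrow> 'v \<Rightarrow> 'v) \<Rightarrow> 'v \<Rightarrow> 'v \<Rightarrow> 'v L0elem" where
  "br_TT trip x y = l0_img trip [(x, y)]"

definition br_L0T :: "'v L0elem \<Rightarrow> 'v \<Rightarrow> 'v" where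
  "br_L0T D w = fst D w"

definition br_TL0 :: "'v \<Rightarrow> 'v L0elem \<Rightarrow> 'v" where
  "br_TL0 z D = snd D z"

definition abelian_subalg_L0 ::
  "('k \<Rightarrow> 'v::ab_group_add \<Rightarrow> 'v) \<Rightarrow> ('v \<Rightarrow> 'v \<Rightarrow> 'v \<Rightarrow> 'v) \<Rightarrow> 'v L0elem set \<Rightarrow> bool" where
  "abelian_subalg_L0 scale trip H \<longleftrightarrow>
     H \<subseteq> L0 trip \<and> l0_zero \<in> H \<and>
     (\<forall>h\<in>H. \<forall>h'\<in>H. l0_add h h' \<in> H) \<and>
     (\<forall>a. \<forall>h\<in>H. l0_scale scale a h \<in> H) \<and>
     (\<forall>h\<in>H. \<forall>h'\<in>H. br_L0L0 trip h h' = l0_zero)"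

definition max_abelian_subalg_L0 ::
  "('k \<Rightarrow> 'v::ab_group_add \<Rightarrow> 'v) \<Rightarrow> ('v \<Rightarrow> 'v \<Rightarrow> 'v \<Rightarrow> 'v) \<Rightarrow> 'v L0elem set \<Rightarrow> bool" where
  "max_abelian_subalg_L0 scale trip H \<longleftrightarrow>
     abelian_subalg_L0 scale trip H \<and>
     (\<forall>H'. abelian_subalg_L0 scale trip H' \<and> H \<subseteq> H' \<longrightarrow> H' = H)"

text \<open>(H^0)^*: linear functionals on H^0; normalised to be 0 outside H^0 so that
  equality of functionals is equality of HOL functions.\<close>

definition dual_H ::
  "('k::field \<Rightarrow> 'v::ab_group_add \<Rightarrow> 'v) \<Rightarrow> 'v L0elem set \<Rightarrow> ('v L0elem \<Rightarrow> 'k) set" where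
  "dual_H scale H = {\<alpha>.
     (\<forall>h\<in>H. \<forall>h'\<in>H. \<alpha> (l0_add h h') = \<alpha> h + \<alpha> h') \<and>
     (\<forall>a. \<forall>h\<in>H. \<alpha> (l0_scale scale a h) = a * \<alpha> h) \<and>
     (\<forall>x. x \<notin> H \<longrightarrow> \<alpha> x = 0)}"

definition T_root ::
  "('k \<Rightarrow> 'v::ab_group_add \<Rightarrow> 'v) \<Rightarrow> 'v L0elem set \<Rightarrow> ('v L0elem \<Rightarrow> 'k) \<Rightarrow> 'v set" where
  "T_root scale H \<alpha> = {t. \<forall>h\<in>H. br_TL0 t h = scale (\<alpha> h) t}"

definition L0_root ::
  "('k \<Rightarrow> 'v::ab_group_add \<Rightarrow> 'v) \<Rightarrow> ('v \<Rightarrow> 'v \<Rightarrow> 'v \<Rightarrow> 'v) \<Rightarrow> 'v L0elem set \<Rightarrow>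
     ('v L0elem \<Rightarrow> 'k) \<Rightarrow> 'v L0elem set" where
  "L0_root scale trip H \<alpha> = {v \<in> L0 trip. \<forall>h\<in>H. br_L0L0 trip v h = l0_scale scale (\<alpha> h) v}"

definition Lambda1 ::
  "('k::field \<Rightarrow> 'v::ab_group_add \<Rightarrow> 'v) \<Rightarrow> 'v L0elem set \<Rightarrow> ('v L0elem \<Rightarrow> 'k) set" where
  "Lambda1 scale H = {\<alpha> \<in> dual_H scale H. \<alpha> \<noteq> (\<lambda>_. 0) \<and> T_root scale H \<alpha> \<noteq> {0}}"

definition Lambda0 ::
  "('k::field \<Rightarrow> 'v::ab_group_add \<Rightarrow> 'v) \<Rightarrow> ('v \<Rightarrow> 'v \<Rightarrow> 'v \<Rightarrow> 'v) \<Rightarrow> 'v L0elem set \<Rightarrow>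
     ('v L0elem \<Rightarrow> 'k) set" where
  "Lambda0 scale trip H = {\<alpha> \<in> dual_H scale H. \<alpha> \<noteq> (\<lambda>_. 0) \<and> L0_root scale trip H \<alpha> \<noteq> {l0_zero}}"

definition symmetric_roots :: "('a \<Rightarrow> 'k::ab_group_add) set \<Rightarrow> bool" where
  "symmetric_roots \<Lambda> \<longleftrightarrow> (\<forall>\<alpha>\<in>\<Lambda>. (\<lambda>h. - \<alpha> h) \<in> \<Lambda>)"

definition split_LTS ::
  "('k::field \<Rightarrow> 'v::ab_group_add \<Rightarrow> 'v) \<Rightarrow> ('v \<Rightarrow> 'v \<Rightarrow> 'v \<Rightarrow> 'v) \<Rightarrow> 'v L0elem set \<Rightarrow> bool" where
  "split_LTS scale trip H \<longleftrightarrow>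
     (let Z = (\<lambda>_. 0); R = Lambda1 scale H \<union> {Z} in
      \<comment> \<open>T = T_0 + sum of T_alpha ...\<close>
      (\<forall>t. \<exists>S f. finite S \<and> S \<subseteq> R \<and> (\<forall>\<alpha>\<in>S. f \<alpha> \<in> T_root scale H \<alpha>) \<and> t = sum f S) \<and>
      \<comment> \<open>... and the sum is direct\<close>
      (\<forall>S f. finite S \<and> S \<subseteq> R \<and> (\<forall>\<alpha>\<in>S. f \<alpha> \<in> T_root scale H \<alpha>) \<and> sum f S = 0
             \<longrightarrow> (\<forall>\<alpha>\<in>S. f \<alpha> = 0)) \<and>
      (\<forall>a\<in>T_root scale H Z. \<forall>b\<in>T_root scale H Z. \<forall>c\<in>T_root scale H Z. trip a b c = 0) \<and>
      (\<forall>\<alpha>\<in>Lambda1 scale H. \<forall>a\<in>T_root scale H \<alpha>. \<forall>b\<in>T_root scale H (\<lambda>h. - \<alpha> h).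
          \<forall>c\<in>T_root scale H Z. trip a b c = 0))"

definition psum :: "(nat \<Rightarrow> 'a \<Rightarrow> 'k::comm_monoid_add) \<Rightarrow> nat \<Rightarrow> 'a \<Rightarrow> 'k" where
  "psum a m = (\<lambda>h. \<Sum>i = 1..m. a i h)"

definition roots_connected ::
  "('a \<Rightarrow> 'k::ab_group_add) set \<Rightarrow> ('a \<Rightarrow> 'k) set \<Rightarrow> ('a \<Rightarrow> 'k) \<Rightarrow> ('a \<Rightarrow> 'k) \<Rightarrow> bool" where
  "roots_connected \<Lambda>1 \<Lambda>0 \<alpha> \<beta> \<longleftrightarrow>
     (\<exists>n a. (\<forall>i\<in>{1..2*n+1}. a i \<in> \<Lambda>1 \<union> {(\<lambda>_. 0)}) \<and>
            (\<forall>k\<le>n. psum a (2*k+1) \<in> \<Lambda>1) \<and>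
            (\<forall>k\<in>{1..n}. psum a (2*k) \<in> \<Lambda>0) \<and>
            a 1 = \<alpha> \<and>
            (psum a (2*n+1) = \<beta> \<or> psum a (2*n+1) = (\<lambda>h. - \<beta> h)))"

definition connected_class ::
  "('a \<Rightarrow> 'k::ab_group_add) set \<Rightarrow> ('a \<Rightarrow> 'k) set \<Rightarrow> ('a \<Rightarrow> 'k) \<Rightarrow> ('a \<Rightarrow> 'k) set" where
  "connected_class \<Lambda>1 \<Lambda>0 \<alpha>0 = {\<beta> \<in> \<Lambda>1. roots_connected \<Lambda>1 \<Lambda>0 \<alpha>0 \<beta>}"

end

theory Submission
  imports Defs
begin

text \<open>
  Let \<open>C\<close> be the class of roots connected with \<open>\<alpha>0\<close>. Roots in \<open>C\<close> and roots outside it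
  do not interact: if \<open>\<beta> \<in> C\<close>, \<open>\<gamma> \<notin> C\<close> and \<open>L\<^sup>0\<close> had a nonzero element of weight
  \<open>\<beta> + \<gamma>\<close>, then \<open>\<beta> + \<gamma> \<in> \<Lambda>\<^sup>0\<close> and the chain \<open>\<beta>, \<gamma>, -\<beta>\<close> would connect \<open>\<gamma>\<close> with \<open>\<alpha>0\<close>.
  Likewise, if \<open>\<beta> \<in> C\<close> and \<open>\<beta> + \<gamma> = \<epsilon> \<notin> C\<close>, then \<open>L\<^sup>0\<^sub>\<epsilon> = 0\<close>, via the chain \<open>\<beta>, \<gamma>, 0\<close>.

  For (1), weights force \<open>{x,y,z} = 0\<close> unless \<open>\<alpha>3 \<in> C\<close>; then \<open>[z,e] = 0\<close>, and the Leibniz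
  identity \<open>[[X,z],e] = [X,[z,e]] + [[X,e],z]\<close> for \<open>X = [x,y]\<close> turns \<open>[{x,y,z},e]\<close> into
  \<open>[{x,y,e},z]\<close>, an element of \<open>L\<^sup>0\<^sub>\<epsilon>\<close> with \<open>\<epsilon> = \<alpha>3 + (\<alpha>1 + \<alpha>2 + \<epsilon>)\<close>, hence zero.
  For (2), \<open>L\<^sup>0\<^sub>\<epsilon>\<close> acts on \<open>T\<close> by derivations of the triple product, and each of the three
  resulting terms contains a bracket between \<open>C\<close> and \<open>\<epsilon>\<close>. Then (3) follows from (1) and (2),
  since \<open>{X,t,e} = [X,[t,e]] + {X,e,t}\<close> with \<open>[t,e] \<in> L\<^sup>0\<^sub>\<epsilon>\<close>.
\<close>

declare br_L0T_def [simp] br_TL0_def [simp]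

locale leibniz_triple =
  fixes scale :: "'k::field \<Rightarrow> 'v::ab_group_add \<Rightarrow> 'v"
    and trip :: "'v \<Rightarrow> 'v \<Rightarrow> 'v \<Rightarrow> 'v"
  assumes leibniz_triple_system: "leibniz_triple_system scale trip"
begin

sublocale vs: vector_space scale
  using leibniz_triple_system by (simp add: leibniz_triple_system_def)

lemma trip_module_hom:
  "module_hom scale scale (\<lambda>a. trip a b c)"
  "module_hom scale scale (\<lambda>b. trip a b c)"
  "module_hom scale scale (\<lambda>c. trip a b c)"
  using leibniz_triple_system by (simp_all add: leibniz_triple_system_def module_hom_iff_linear)

lemmas trip_add [simp] = trip_module_hom[THEN module_hom.add]
lemmas trip_diff [simp] = trip_module_hom[THEN module_hom.diff]
lemmas trip_minus [simp] = trip_module_hom[THEN module_hom.neg]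
lemmas trip_zero [simp] = trip_module_hom[THEN module_hom.zero]
lemmas trip_scale [simp] = trip_module_hom[THEN module_hom.scale]

lemma leibniz_middle:
  "trip a (trip b c d) e =
     trip (trip a b c) d e - trip (trip a c b) d e - trip (trip a d b) c e + trip (trip a d c) b e"
  using leibniz_triple_system by (simp add: leibniz_triple_system_def)

lemma leibniz_right:
  "trip a b (trip c d e) =
     trip (trip a b c) d e - trip (trip a b d) c e - trip (trip a b e) c d + trip (trip a b e) d c"
  using leibniz_triple_system by (simp add: leibniz_triple_system_def)

text \<open>\<open>ract u v w\<close> is the bracket \<open>[w, u \<otimes> v]\<close> in the standard embedding.\<close>

definition ract :: "'v \<Rightarrow> 'v \<Rightarrow> 'v \<Rightarrow> 'v" where
  "ract u v w = trip w u v - trip w v u"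

lemma ract_add [simp]: "ract u v (a + b) = ract u v a + ract u v b"
  by (simp add: ract_def)

lemma ract_diff [simp]: "ract u v (a - b) = ract u v a - ract u v b"
  by (simp add: ract_def)

lemma ract_zero [simp]: "ract u v 0 = 0"
  by (simp add: ract_def)

lemma ract_scale [simp]: "ract u v (scale k a) = scale k (ract u v a)"
  by (simp add: ract_def vs.scale_right_diff_distrib)

lemma ract_derivation:
  "ract u v (trip a b c) = trip (ract u v a) b c + trip a (ract u v b) c + trip a b (ract u v c)"
  by (simp add: ract_def leibniz_middle leibniz_right algebra_simps)

lemma trip_bracket_symm_zero: "trip a b (trip u v w + ract u v w) = 0"
  by (simp add: ract_def leibniz_middle leibniz_right algebra_simps)

lemma trip_bracket_tensor:
  "trip (trip x y u) v w - trip (trip x y v) u w = trip x y (trip u v w) + ract u v (trip x y w)"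
  by (simp add: ract_def leibniz_middle leibniz_right algebra_simps)

lemma ract_bracket_tensor:
  "ract (trip x y u) v w - ract (trip x y v) u w = ract u v (ract x y w) - ract x y (ract u v w)"
  by (simp add: ract_def leibniz_middle leibniz_right algebra_simps)

lemma fst_l0_img_Nil [simp]: "fst (l0_img trip []) w = 0"
  by (simp add: l0_img_def)

lemma snd_l0_img_Nil [simp]: "snd (l0_img trip []) w = 0"
  by (simp add: l0_img_def)

lemma fst_l0_img_Cons [simp]:
  "fst (l0_img trip (p # xs)) w = trip (fst p) (snd p) w + fst (l0_img trip xs) w"
  by (cases p) (simp add: l0_img_def)

lemma snd_l0_img_Cons [simp]:
  "snd (l0_img trip (p # xs)) w = ract (fst p) (snd p) w + snd (l0_img trip xs) w"
  by (cases p) (simp add: l0_img_def ract_def)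

lemma fst_l0_img_append [simp]:
  "fst (l0_img trip (xs @ ys)) w = fst (l0_img trip xs) w + fst (l0_img trip ys) w"
  by (induction xs) (simp_all add: algebra_simps)

lemma snd_l0_img_append [simp]:
  "snd (l0_img trip (xs @ ys)) w = snd (l0_img trip xs) w + snd (l0_img trip ys) w"
  by (induction xs) (simp_all add: algebra_simps)

lemma snd_l0_img_add [simp]:
  "snd (l0_img trip xs) (a + b) = snd (l0_img trip xs) a + snd (l0_img trip xs) b"
  by (induction xs) (simp_all add: algebra_simps)

lemma snd_l0_img_diff [simp]:
  "snd (l0_img trip xs) (a - b) = snd (l0_img trip xs) a - snd (l0_img trip xs) b"
  by (induction xs) (simp_all add: algebra_simps)

lemma snd_l0_img_zero [simp]: "snd (l0_img trip xs) 0 = 0"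
  by (induction xs) simp_all

lemma snd_l0_img_scale [simp]:
  "snd (l0_img trip xs) (scale k a) = scale k (snd (l0_img trip xs) a)"
  by (induction xs) (simp_all add: vs.scale_right_distrib)

lemma snd_l0_img_derivation:
  "snd (l0_img trip xs) (trip a b c) =
     trip (snd (l0_img trip xs) a) b c + trip a (snd (l0_img trip xs) b) c
       + trip a b (snd (l0_img trip xs) c)"
  by (induction xs) (simp_all add: ract_derivation algebra_simps)

lemma trip_l0_img_symm_zero:
  "trip a b (fst (l0_img trip xs) w + snd (l0_img trip xs) w) = 0"
proof (induction xs)
  case (Cons p xs)
  then show ?case
    using trip_bracket_symm_zero[of a b "fst p" "snd p" w] by (simp add: algebra_simps)
qed simp

lemma fst_l0_img_brk_rep_single:
  "fst (l0_img trip (concat (map (\<lambda>(u, v). [(trip x y u, v), (- trip x y v, u)]) ys))) w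
     = trip x y (fst (l0_img trip ys) w) + snd (l0_img trip ys) (trip x y w)"
proof (induction ys)
  case (Cons p ys)
  then show ?case
    using trip_bracket_tensor[of x y "fst p" "snd p" w] by (cases p) (simp add: algebra_simps)
qed simp

lemma snd_l0_img_brk_rep_single:
  "snd (l0_img trip (concat (map (\<lambda>(u, v). [(trip x y u, v), (- trip x y v, u)]) ys))) w
     = snd (l0_img trip ys) (ract x y w) - ract x y (snd (l0_img trip ys) w)"
proof (induction ys)
  case (Cons p ys)
  then show ?case
    using ract_bracket_tensor[of x y "fst p" "snd p" w]
    by (cases p) (simp add: ract_def algebra_simps)
qed simp

lemma brk_rep_Cons:
  "brk_rep trip (p # xs) ys =
     concat (map (\<lambda>(u, v). [(trip (fst p) (snd p) u, v), (- trip (fst p) (snd p) v, u)]) ys)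
       @ brk_rep trip xs ys"
  by (cases p) (simp add: brk_rep_def)

lemma fst_l0_img_brk_rep:
  "fst (l0_img trip (brk_rep trip xs ys)) w
     = fst (l0_img trip xs) (fst (l0_img trip ys) w) + snd (l0_img trip ys) (fst (l0_img trip xs) w)"
  by (induction xs)
    (simp_all add: brk_rep_def[of trip "[]"] brk_rep_Cons fst_l0_img_brk_rep_single algebra_simps)

lemma snd_l0_img_brk_rep:
  "snd (l0_img trip (brk_rep trip xs ys)) w
     = snd (l0_img trip ys) (snd (l0_img trip xs) w) - snd (l0_img trip xs) (snd (l0_img trip ys) w)"
  by (induction xs)
    (simp_all add: brk_rep_def[of trip "[]"] brk_rep_Cons snd_l0_img_brk_rep_single algebra_simps)

text \<open>In particular the bracket does not depend on the representatives chosen by \<open>SOME\<close>.\<close>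

lemma br_L0L0_eq:
  assumes "D \<in> L0 trip" "E \<in> L0 trip"
  shows "br_L0L0 trip D E =
    (\<lambda>w. fst D (fst E w) + snd E (fst D w), \<lambda>w. snd E (snd D w) - snd D (snd E w))"
proof -
  let ?xs = "SOME xs. l0_img trip xs = D" and ?ys = "SOME ys. l0_img trip ys = E"
  have "\<exists>xs. l0_img trip xs = D" "\<exists>ys. l0_img trip ys = E"
    using assms by (auto simp: L0_def)
  then have xs: "l0_img trip ?xs = D" and ys: "l0_img trip ?ys = E"
    by (auto intro: someI_ex)
  show ?thesis
    unfolding br_L0L0_def
    by (rule prod_eqI) (simp_all add: fun_eq_iff fst_l0_img_brk_rep snd_l0_img_brk_rep xs ys)
qed

lemma fst_br_TT [simp]: "fst (br_TT trip x y) w = trip x y w"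
  by (simp add: br_TT_def)

lemma snd_br_TT [simp]: "snd (br_TT trip x y) w = ract x y w"
  by (simp add: br_TT_def)

lemma br_TT_in_L0: "br_TT trip x y \<in> L0 trip"
  by (simp add: br_TT_def L0_def)

lemma br_TT_eq_zero_iff: "br_TT trip x y = l0_zero \<longleftrightarrow> (\<forall>w. trip x y w = 0 \<and> ract x y w = 0)"
  by (auto simp: l0_zero_def prod_eq_iff fun_eq_iff)

text \<open>The Leibniz identity \<open>[[X,u],v] = [X,[u,v]] + [[X,v],u]\<close> for \<open>X = [x,y]\<close>.\<close>

lemma br_TT_trip_swap:
  assumes "br_TT trip u v = l0_zero"
  shows "br_TT trip (trip x y u) v = br_TT trip (trip x y v) u"
  using assms trip_bracket_tensor[of x y u v] ract_bracket_tensor[of x y u v]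
  by (intro prod_eqI ext) (simp_all add: br_TT_eq_zero_iff)

context
  fixes H :: "'v L0elem set"
  assumes H_L0: "H \<subseteq> L0 trip"
begin

lemma T_root_iff: "t \<in> T_root scale H \<alpha> \<longleftrightarrow> (\<forall>h\<in>H. snd h t = scale (\<alpha> h) t)"
  by (simp add: T_root_def)

lemma trip_in_T_root:
  assumes "x \<in> T_root scale H a" "y \<in> T_root scale H b" "z \<in> T_root scale H c"
  shows "trip x y z \<in> T_root scale H (\<lambda>h. a h + b h + c h)"
  unfolding T_root_iff
proof
  fix h assume "h \<in> H"
  then obtain ys where "h = l0_img trip ys"
    using H_L0 by (auto simp: L0_def)
  with \<open>h \<in> H\<close> assms show "snd h (trip x y z) = scale (a h + b h + c h) (trip x y z)"
    by (simp add: T_root_iff snd_l0_img_derivation vs.scale_left_distrib)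
qed

lemma br_TT_in_L0_root:
  assumes x: "x \<in> T_root scale H a" and y: "y \<in> T_root scale H b"
  shows "br_TT trip x y \<in> L0_root scale trip H (\<lambda>h. a h + b h)"
  unfolding L0_root_def
proof (intro CollectI conjI ballI br_TT_in_L0)
  fix h assume "h \<in> H"
  then obtain ys where h: "h = l0_img trip ys"
    using H_L0 by (auto simp: L0_def)
  have hx: "snd h x = scale (a h) x" and hy: "snd h y = scale (b h) y"
    using x y \<open>h \<in> H\<close> by (auto simp: T_root_iff)
  have fst_eq: "trip x y (fst h w) + snd h (trip x y w) = scale (a h + b h) (trip x y w)" for w
    using trip_l0_img_symm_zero[of x y ys w] snd_l0_img_derivation[of ys x y w] hx hy
    by (simp add: h vs.scale_left_distrib algebra_simps)
  have snd_eq: "snd h (ract x y w) - ract x y (snd h w) = scale (a h + b h) (ract x y w)" for w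
    using snd_l0_img_derivation[of ys w x y] snd_l0_img_derivation[of ys w y x] hx hy
    by (simp add: h ract_def vs.scale_left_distrib vs.scale_right_diff_distrib algebra_simps)
  show "br_L0L0 trip (br_TT trip x y) h = l0_scale scale (a h + b h) (br_TT trip x y)"
    using \<open>h \<in> H\<close> H_L0 fst_eq snd_eq
    by (subst br_L0L0_eq) (auto simp: br_TT_in_L0 l0_scale_def)
qed

lemma br_TL0_in_T_root:
  assumes D: "D \<in> L0_root scale trip H e" and z: "z \<in> T_root scale H b"
  shows "br_TL0 z D \<in> T_root scale H (\<lambda>h. b h + e h)"
  unfolding T_root_iff br_TL0_def
proof
  fix h assume "h \<in> H"
  then obtain ys where h: "h = l0_img trip ys"
    using H_L0 by (auto simp: L0_def)
  obtain xs where Dxs: "D = l0_img trip xs"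
    using D by (auto simp: L0_root_def L0_def)
  have "br_L0L0 trip D h = l0_scale scale (e h) D"
    using D \<open>h \<in> H\<close> by (auto simp: L0_root_def)
  with \<open>h \<in> H\<close> H_L0 D have "snd h (snd D z) - snd D (snd h z) = scale (e h) (snd D z)"
    by (subst (asm) br_L0L0_eq) (auto simp: L0_root_def l0_scale_def prod_eq_iff fun_eq_iff)
  with z \<open>h \<in> H\<close> show "snd h (snd D z) = scale (b h + e h) (snd D z)"
    by (simp add: T_root_iff Dxs vs.scale_left_distrib algebra_simps)
qed

end

end

definition root_chain ::
  "('a \<Rightarrow> 'k::ab_group_add) set \<Rightarrow> ('a \<Rightarrow> 'k) set \<Rightarrow> nat \<Rightarrow> (nat \<Rightarrow> 'a \<Rightarrow> 'k) \<Rightarrow> bool" where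
  "root_chain \<Lambda>1 \<Lambda>0 n a \<longleftrightarrow>
     (\<forall>i\<in>{1..2*n+1}. a i \<in> \<Lambda>1 \<union> {(\<lambda>_. 0)}) \<and>
     (\<forall>k\<le>n. psum a (2*k+1) \<in> \<Lambda>1) \<and>
     (\<forall>k\<in>{1..n}. psum a (2*k) \<in> \<Lambda>0)"

lemma roots_connected_iff_root_chain:
  "roots_connected \<Lambda>1 \<Lambda>0 \<alpha> \<beta> \<longleftrightarrow>
     (\<exists>n a. root_chain \<Lambda>1 \<Lambda>0 n a \<and> a 1 = \<alpha> \<and>
        (psum a (2*n+1) = \<beta> \<or> psum a (2*n+1) = (\<lambda>h. - \<beta> h)))"
  by (simp add: roots_connected_def root_chain_def)

lemma psum_Suc: "psum a (Suc m) = (\<lambda>h. psum a m h + a (Suc m) h)"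
  by (simp add: psum_def)

lemma psum_cong: "(\<And>i. 1 \<le> i \<Longrightarrow> i \<le> m \<Longrightarrow> a i = b i) \<Longrightarrow> psum a m = psum b m"
  unfolding psum_def by (intro ext sum.cong) auto

lemma root_chain_append:
  fixes \<Lambda>1 \<Lambda>0 :: "('a \<Rightarrow> 'k::ab_group_add) set"
    and a :: "nat \<Rightarrow> 'a \<Rightarrow> 'k" and n :: nat and \<gamma> \<delta> :: "'a \<Rightarrow> 'k"
  defines "a' \<equiv> a(2*n+2 := \<gamma>, 2*n+3 := \<delta>)"
  assumes chain: "root_chain \<Lambda>1 \<Lambda>0 n a"
    and \<gamma>: "\<gamma> \<in> \<Lambda>1 \<union> {(\<lambda>_. 0)}" and \<delta>: "\<delta> \<in> \<Lambda>1 \<union> {(\<lambda>_. 0)}"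
    and even: "(\<lambda>h. psum a (2*n+1) h + \<gamma> h) \<in> \<Lambda>0"
    and odd: "(\<lambda>h. psum a (2*n+1) h + \<gamma> h + \<delta> h) \<in> \<Lambda>1"
  shows "root_chain \<Lambda>1 \<Lambda>0 (Suc n) a'" and "a' 1 = a 1"
    and "psum a' (2 * Suc n + 1) = (\<lambda>h. psum a (2*n+1) h + \<gamma> h + \<delta> h)"
proof -
  have same: "psum a' m = psum a m" if "m \<le> 2*n+1" for m
    using that by (intro psum_cong) (auto simp: a'_def)
  have even': "psum a' (2 * Suc n) = (\<lambda>h. psum a (2*n+1) h + \<gamma> h)"
    using same[of "2*n+1"] psum_Suc[of a' "2*n+1"] by (simp add: a'_def)
  show odd': "psum a' (2 * Suc n + 1) = (\<lambda>h. psum a (2*n+1) h + \<gamma> h + \<delta> h)"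
    using even' psum_Suc[of a' "2 * Suc n"] by (simp add: a'_def)
  show "a' 1 = a 1"
    by (simp add: a'_def)
  show "root_chain \<Lambda>1 \<Lambda>0 (Suc n) a'"
    unfolding root_chain_def
  proof (intro conjI ballI allI impI)
    fix i assume "i \<in> {1..2 * Suc n + 1}"
    then show "a' i \<in> \<Lambda>1 \<union> {(\<lambda>_. 0)}"
      using chain \<gamma> \<delta> by (auto simp: root_chain_def a'_def)
  next
    fix k assume "k \<le> Suc n"
    then consider "k \<le> n" | "k = Suc n"
      by linarith
    then show "psum a' (2*k+1) \<in> \<Lambda>1"
    proof cases
      case 1
      then show ?thesis using chain same[of "2*k+1"] by (simp add: root_chain_def)
    qed (use odd odd' in simp)
  next
    fix k assume "k \<in> {1..Suc n}"
    then consider "k \<in> {1..n}" | "k = Suc n"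
      by fastforce
    then show "psum a' (2*k) \<in> \<Lambda>0"
    proof cases
      case 1
      then show ?thesis using chain same[of "2*k"] by (simp add: root_chain_def)
    qed (use even even' in simp)
  qed
qed

lemma roots_connected_uminus:
  "roots_connected \<Lambda>1 \<Lambda>0 \<alpha> \<beta> \<Longrightarrow> roots_connected \<Lambda>1 \<Lambda>0 \<alpha> (\<lambda>h. - \<beta> h)"
  by (auto simp: roots_connected_def)

lemma roots_connected_extend:
  fixes \<Lambda>1 \<Lambda>0 :: "('a \<Rightarrow> 'k::ab_group_add) set"
  assumes sym1: "symmetric_roots \<Lambda>1" and sym0: "symmetric_roots \<Lambda>0"
    and conn: "roots_connected \<Lambda>1 \<Lambda>0 \<alpha> \<beta>"
    and \<gamma>: "\<gamma> \<in> \<Lambda>1 \<union> {(\<lambda>_. 0)}" and \<delta>: "\<delta> \<in> \<Lambda>1 \<union> {(\<lambda>_. 0)}"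
    and even: "(\<lambda>h. \<beta> h + \<gamma> h) \<in> \<Lambda>0" and odd: "(\<lambda>h. \<beta> h + \<gamma> h + \<delta> h) \<in> \<Lambda>1"
  shows "roots_connected \<Lambda>1 \<Lambda>0 \<alpha> (\<lambda>h. \<beta> h + \<gamma> h + \<delta> h)"
proof -
  obtain n a where chain: "root_chain \<Lambda>1 \<Lambda>0 n a" and start: "a 1 = \<alpha>"
    and "psum a (2*n+1) = \<beta> \<or> psum a (2*n+1) = (\<lambda>h. - \<beta> h)"
    using conn by (auto simp: roots_connected_iff_root_chain)
  then consider "psum a (2*n+1) = \<beta>" | "psum a (2*n+1) = (\<lambda>h. - \<beta> h)"
    by blast
  then show ?thesis
  proof cases
    case 1
    with even odd have "(\<lambda>h. psum a (2*n+1) h + \<gamma> h) \<in> \<Lambda>0"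
      and "(\<lambda>h. psum a (2*n+1) h + \<gamma> h + \<delta> h) \<in> \<Lambda>1"
      by simp_all
    from root_chain_append[OF chain \<gamma> \<delta> this] start 1 show ?thesis
      unfolding roots_connected_iff_root_chain by (metis (no_types))
  next
    case 2
    have \<gamma>': "(\<lambda>h. - \<gamma> h) \<in> \<Lambda>1 \<union> {(\<lambda>_. 0)}" and \<delta>': "(\<lambda>h. - \<delta> h) \<in> \<Lambda>1 \<union> {(\<lambda>_. 0)}"
      using \<gamma> \<delta> sym1 by (auto simp: symmetric_roots_def)
    have "(\<lambda>h. - (\<beta> h + \<gamma> h)) \<in> \<Lambda>0" "(\<lambda>h. - (\<beta> h + \<gamma> h + \<delta> h)) \<in> \<Lambda>1"
      using even odd sym0 sym1 by (auto simp: symmetric_roots_def)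
    with 2 have "(\<lambda>h. psum a (2*n+1) h + - \<gamma> h) \<in> \<Lambda>0"
      and "(\<lambda>h. psum a (2*n+1) h + - \<gamma> h + - \<delta> h) \<in> \<Lambda>1"
      by simp_all
    note extended = root_chain_append[OF chain \<gamma>' \<delta>' this]
    have "(\<lambda>h. psum a (2*n+1) h + - \<gamma> h + - \<delta> h) = (\<lambda>h. - (\<beta> h + \<gamma> h + \<delta> h))"
      using 2 by simp
    with extended start show ?thesis
      unfolding roots_connected_iff_root_chain by (metis (no_types))
  qed
qed

lemma dual_H_add: "a \<in> dual_H scale H \<Longrightarrow> b \<in> dual_H scale H \<Longrightarrow> (\<lambda>h. a h + b h) \<in> dual_H scale H"
  by (simp add: dual_H_def algebra_simps)

lemma dual_H_zero: "(\<lambda>_. 0) \<in> dual_H scale H"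
  by (simp add: dual_H_def)

lemma Lambda1_dual_H: "\<alpha> \<in> Lambda1 scale H \<Longrightarrow> \<alpha> \<in> dual_H scale H"
  by (simp add: Lambda1_def)

lemma Lambda1_nonzero: "\<alpha> \<in> Lambda1 scale H \<Longrightarrow> \<alpha> \<noteq> (\<lambda>_. 0)"
  by (simp add: Lambda1_def)

lemma Lambda1I:
  "\<alpha> \<in> dual_H scale H \<Longrightarrow> \<alpha> \<noteq> (\<lambda>_. 0) \<Longrightarrow> t \<in> T_root scale H \<alpha> \<Longrightarrow> t \<noteq> 0
     \<Longrightarrow> \<alpha> \<in> Lambda1 scale H"
  unfolding Lambda1_def by auto

lemma Lambda0I:
  "\<alpha> \<in> dual_H scale H \<Longrightarrow> \<alpha> \<noteq> (\<lambda>_. 0) \<Longrightarrow> X \<in> L0_root scale trip H \<alpha> \<Longrightarrow> X \<noteq> l0_zero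
     \<Longrightarrow> \<alpha> \<in> Lambda0 scale trip H"
  unfolding Lambda0_def by auto

locale split_lts = leibniz_triple scale trip
  for scale :: "'k::field \<Rightarrow> 'v::ab_group_add \<Rightarrow> 'v" and trip +
  fixes H :: "'v L0elem set" and \<alpha>0 :: "'v L0elem \<Rightarrow> 'k"
  assumes H_L0: "H \<subseteq> L0 trip"
    and split: "split_LTS scale trip H"
    and Lambda1_symmetric: "symmetric_roots (Lambda1 scale H)"
    and Lambda0_symmetric: "symmetric_roots (Lambda0 scale trip H)"
begin

abbreviation "\<Lambda>1 \<equiv> Lambda1 scale H"
abbreviation "\<Lambda>0 \<equiv> Lambda0 scale trip H"
abbreviation "C \<equiv> connected_class \<Lambda>1 \<Lambda>0 \<alpha>0"

lemma connected_class_Lambda1: "\<beta> \<in> C \<Longrightarrow> \<beta> \<in> \<Lambda>1"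
  by (simp add: connected_class_def)

lemma class_or_zero_dual_H: "\<beta> \<in> C \<union> {(\<lambda>_. 0)} \<Longrightarrow> \<beta> \<in> dual_H scale H"
  by (auto simp: dual_H_zero Lambda1_dual_H connected_class_Lambda1)

lemma connected_class_uminus: "\<beta> \<in> C \<Longrightarrow> (\<lambda>h. - \<beta> h) \<in> C"
  using Lambda1_symmetric
  by (auto simp: connected_class_def symmetric_roots_def intro: roots_connected_uminus)

lemma connected_class_extend:
  assumes "\<beta> \<in> C" "\<gamma> \<in> \<Lambda>1 \<union> {(\<lambda>_. 0)}" "\<delta> \<in> \<Lambda>1 \<union> {(\<lambda>_. 0)}"
    and "(\<lambda>h. \<beta> h + \<gamma> h) \<in> \<Lambda>0" "(\<lambda>h. \<beta> h + \<gamma> h + \<delta> h) \<in> \<Lambda>1"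
  shows "(\<lambda>h. \<beta> h + \<gamma> h + \<delta> h) \<in> C"
  using assms roots_connected_extend[OF Lambda1_symmetric Lambda0_symmetric]
  by (simp add: connected_class_def)

lemma L0_root_class_plus_nonclass_zero:
  assumes \<beta>: "\<beta> \<in> C" and \<gamma>: "\<gamma> \<in> \<Lambda>1 - C"
    and X: "X \<in> L0_root scale trip H (\<lambda>h. \<beta> h + \<gamma> h)"
  shows "X = l0_zero"
proof (rule ccontr)
  assume "X \<noteq> l0_zero"
  have "(\<lambda>h. \<beta> h + \<gamma> h) \<noteq> (\<lambda>_. 0)"
  proof
    assume "(\<lambda>h. \<beta> h + \<gamma> h) = (\<lambda>_. 0)"
    then have "\<gamma> = (\<lambda>h. - \<beta> h)"
      by (auto simp: fun_eq_iff eq_neg_iff_add_eq_0 add.commute)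
    with connected_class_uminus[OF \<beta>] \<gamma> show False by simp
  qed
  moreover have "(\<lambda>h. \<beta> h + \<gamma> h) \<in> dual_H scale H"
    using \<beta> \<gamma> by (simp add: dual_H_add Lambda1_dual_H connected_class_Lambda1)
  ultimately have "(\<lambda>h. \<beta> h + \<gamma> h) \<in> \<Lambda>0"
    using Lambda0I X \<open>X \<noteq> l0_zero\<close> by blast
  moreover have "(\<lambda>h. - \<beta> h) \<in> \<Lambda>1"
    using \<beta> Lambda1_symmetric by (simp add: connected_class_Lambda1 symmetric_roots_def)
  ultimately have "(\<lambda>h. \<beta> h + \<gamma> h + - \<beta> h) \<in> C"
    using \<beta> \<gamma> by (intro connected_class_extend) auto
  with \<gamma> show False by simp
qed

lemma L0_root_nonclass_sum_zero:
  assumes \<beta>: "\<beta> \<in> C" and \<gamma>: "\<gamma> \<in> \<Lambda>1" and \<epsilon>: "\<epsilon> \<in> \<Lambda>1 - C"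
    and sum: "\<And>h. \<beta> h + \<gamma> h = \<epsilon> h" and X: "X \<in> L0_root scale trip H \<epsilon>"
  shows "X = l0_zero"
proof (rule ccontr)
  assume "X \<noteq> l0_zero"
  with \<epsilon> X have "\<epsilon> \<in> \<Lambda>0"
    using Lambda0I Lambda1_dual_H Lambda1_nonzero by blast
  then have "(\<lambda>h. \<beta> h + \<gamma> h) \<in> \<Lambda>0"
    by (simp add: sum)
  then have "(\<lambda>h. \<beta> h + \<gamma> h + 0) \<in> C"
    using \<beta> \<gamma> \<epsilon> by (intro connected_class_extend) (auto simp: sum)
  with \<epsilon> show False by (simp add: sum)
qed

lemma br_TT_class_nonclass_zero:
  assumes "\<beta> \<in> C" "\<gamma> \<in> \<Lambda>1 - C" "z \<in> T_root scale H \<beta>" "e \<in> T_root scale H \<gamma>"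
  shows "br_TT trip z e = l0_zero" and "br_TT trip e z = l0_zero"
proof -
  show "br_TT trip z e = l0_zero"
    using assms by (intro L0_root_class_plus_nonclass_zero br_TT_in_L0_root H_L0)
  have "(\<lambda>h. \<gamma> h + \<beta> h) = (\<lambda>h. \<beta> h + \<gamma> h)"
    by (simp add: add.commute)
  then show "br_TT trip e z = l0_zero"
    using assms br_TT_in_L0_root[OF H_L0, of e \<gamma> z \<beta>]
    by (intro L0_root_class_plus_nonclass_zero) auto
qed

lemma br_TL0_class_nonclass_zero:
  assumes \<beta>: "\<beta> \<in> C" and \<epsilon>: "\<epsilon> \<in> \<Lambda>1 - C"
    and z: "z \<in> T_root scale H \<beta>" and D: "D \<in> L0_root scale trip H \<epsilon>"
  shows "br_TL0 z D = 0"
proof (rule ccontr)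
  assume "br_TL0 z D \<noteq> 0"
  have "(\<lambda>h. \<beta> h + \<epsilon> h) \<noteq> (\<lambda>_. 0)"
  proof
    assume "(\<lambda>h. \<beta> h + \<epsilon> h) = (\<lambda>_. 0)"
    then have "\<epsilon> = (\<lambda>h. - \<beta> h)"
      by (auto simp: fun_eq_iff eq_neg_iff_add_eq_0 add.commute)
    with connected_class_uminus[OF \<beta>] \<epsilon> show False by simp
  qed
  moreover have "(\<lambda>h. \<beta> h + \<epsilon> h) \<in> dual_H scale H"
    using \<beta> \<epsilon> by (simp add: dual_H_add Lambda1_dual_H connected_class_Lambda1)
  ultimately have "(\<lambda>h. \<beta> h + \<epsilon> h) \<in> \<Lambda>1"
    using Lambda1I br_TL0_in_T_root[OF H_L0 D z] \<open>br_TL0 z D \<noteq> 0\<close> by blast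
  from L0_root_nonclass_sum_zero[OF connected_class_uminus[OF \<beta>] this \<epsilon> _ D]
  have "D = l0_zero"
    by simp
  with \<open>br_TL0 z D \<noteq> 0\<close> show False
    by (simp add: l0_zero_def)
qed

lemma trip_opposite_T0_zero:
  assumes \<alpha>: "\<alpha> \<in> \<Lambda>1 \<union> {(\<lambda>_. 0)}"
    and x: "x \<in> T_root scale H \<alpha>" and y: "y \<in> T_root scale H (\<lambda>h. - \<alpha> h)"
    and z: "z \<in> T_root scale H (\<lambda>_. 0)"
  shows "trip x y z = 0"
proof -
  have T0: "\<forall>a\<in>T_root scale H (\<lambda>_. 0). \<forall>b\<in>T_root scale H (\<lambda>_. 0). \<forall>c\<in>T_root scale H (\<lambda>_. 0).
      trip a b c = 0"
    and opposite: "\<forall>\<alpha>\<in>\<Lambda>1. \<forall>a\<in>T_root scale H \<alpha>. \<forall>b\<in>T_root scale H (\<lambda>h. - \<alpha> h).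
      \<forall>c\<in>T_root scale H (\<lambda>_. 0). trip a b c = 0"
    using split unfolding split_LTS_def Let_def by blast+
  show ?thesis
  proof (cases "\<alpha> = (\<lambda>_. 0)")
    case True
    with y have "y \<in> T_root scale H (\<lambda>_. 0)"
      by simp
    with True x z T0 show ?thesis
      by simp
  next
    case False
    with \<alpha> have "\<alpha> \<in> \<Lambda>1"
      by simp
    from opposite[rule_format, OF this x y z] show ?thesis .
  qed
qed

context
  fixes \<alpha>1 \<alpha>2 \<alpha>3 \<epsilon> :: "'v L0elem \<Rightarrow> 'k"
  assumes in_class: "\<alpha>1 \<in> C \<union> {(\<lambda>_. 0)}" "\<alpha>2 \<in> C \<union> {(\<lambda>_. 0)}" "\<alpha>3 \<in> C \<union> {(\<lambda>_. 0)}"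
    and sum_zero: "\<And>h. \<alpha>1 h + \<alpha>2 h + \<alpha>3 h = 0"
    and nonclass: "\<epsilon> \<in> \<Lambda>1 - C"
begin

lemma trip_zero_if_third_weight_zero:
  assumes "\<alpha>3 = (\<lambda>_. 0)"
    and "x \<in> T_root scale H \<alpha>1" "y \<in> T_root scale H \<alpha>2" "z \<in> T_root scale H \<alpha>3"
  shows "trip x y z = 0"
proof -
  have "\<alpha>2 = (\<lambda>h. - \<alpha>1 h)"
    using sum_zero assms(1) by (auto simp: fun_eq_iff eq_neg_iff_add_eq_0 add.commute)
  moreover have "\<alpha>1 \<in> \<Lambda>1 \<union> {(\<lambda>_. 0)}"
    using in_class(1) connected_class_Lambda1 by auto
  ultimately show ?thesis
    using trip_opposite_T0_zero assms by simp
qed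

lemma weight_class_cases:
  assumes "\<alpha>3 \<noteq> (\<lambda>_. 0)"
  shows "\<alpha>1 \<in> C \<or> \<alpha>1 = (\<lambda>_. 0) \<and> \<alpha>2 \<in> C" and "\<alpha>2 \<in> C \<or> \<alpha>2 = (\<lambda>_. 0) \<and> \<alpha>1 \<in> C"
proof -
  have \<alpha>3: "(\<lambda>h. - \<alpha>3 h) \<in> C"
    using in_class(3) assms by (auto intro: connected_class_uminus)
  have "\<alpha>2 = (\<lambda>h. - \<alpha>3 h)" if "\<alpha>1 = (\<lambda>_. 0)"
    using sum_zero that by (auto simp: fun_eq_iff eq_neg_iff_add_eq_0)
  with in_class(1) \<alpha>3 show "\<alpha>1 \<in> C \<or> \<alpha>1 = (\<lambda>_. 0) \<and> \<alpha>2 \<in> C"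
    by auto
  have "\<alpha>1 = (\<lambda>h. - \<alpha>3 h)" if "\<alpha>2 = (\<lambda>_. 0)"
    using sum_zero that by (auto simp: fun_eq_iff eq_neg_iff_add_eq_0)
  with in_class(2) \<alpha>3 show "\<alpha>2 \<in> C \<or> \<alpha>2 = (\<lambda>_. 0) \<and> \<alpha>1 \<in> C"
    by auto
qed

lemma br_TT_trip_nonclass_zero:
  assumes x: "x \<in> T_root scale H \<alpha>1" and y: "y \<in> T_root scale H \<alpha>2"
    and z: "z \<in> T_root scale H \<alpha>3" and e: "e \<in> T_root scale H \<epsilon>"
  shows "br_TT trip (trip x y z) e = l0_zero"
proof (cases "\<alpha>3 = (\<lambda>_. 0)")
  case True
  then show ?thesis
    using trip_zero_if_third_weight_zero[OF True x y z] by (simp add: br_TT_eq_zero_iff ract_def)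
next
  case False
  with in_class(3) have \<alpha>3: "\<alpha>3 \<in> C"
    by simp
  define s where "s = trip x y e"
  define \<gamma> where "\<gamma> = (\<lambda>h. \<alpha>1 h + \<alpha>2 h + \<epsilon> h)"
  have s: "s \<in> T_root scale H \<gamma>"
    unfolding s_def \<gamma>_def using x y e by (rule trip_in_T_root[OF H_L0])
  have sum: "\<alpha>3 h + \<gamma> h = \<epsilon> h" for h
  proof -
    have "\<alpha>3 h + \<gamma> h = (\<alpha>1 h + \<alpha>2 h + \<alpha>3 h) + \<epsilon> h"
      by (simp add: \<gamma>_def algebra_simps)
    then show ?thesis
      by (simp add: sum_zero)
  qed
  have "br_TT trip (trip x y z) e = br_TT trip s z"
    unfolding s_def using br_TT_class_nonclass_zero(1)[OF \<alpha>3 nonclass z e] by (rule br_TT_trip_swap)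
  also have "br_TT trip s z = l0_zero"
  proof (cases "s = 0")
    case True
    then show ?thesis
      by (simp add: br_TT_eq_zero_iff ract_def)
  next
    case False
    have "\<gamma> \<noteq> (\<lambda>_. 0)"
    proof
      assume "\<gamma> = (\<lambda>_. 0)"
      with sum have "\<epsilon> = \<alpha>3"
        by (simp add: fun_eq_iff)
      with \<alpha>3 nonclass show False
        by simp
    qed
    moreover have "\<gamma> \<in> dual_H scale H"
      unfolding \<gamma>_def using in_class nonclass
      by (intro dual_H_add class_or_zero_dual_H Lambda1_dual_H) auto
    ultimately have "\<gamma> \<in> \<Lambda>1"
      using Lambda1I s False by blast
    moreover have "br_TT trip s z \<in> L0_root scale trip H \<epsilon>"
      using br_TT_in_L0_root[OF H_L0 s z] sum by (simp add: add.commute)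
    ultimately show ?thesis
      using L0_root_nonclass_sum_zero[OF \<alpha>3 _ nonclass sum] by blast
  qed
  finally show ?thesis .
qed

lemma br_TL0_trip_nonclass_zero:
  assumes x: "x \<in> T_root scale H \<alpha>1" and y: "y \<in> T_root scale H \<alpha>2"
    and z: "z \<in> T_root scale H \<alpha>3" and D: "D \<in> L0_root scale trip H \<epsilon>"
  shows "br_TL0 (trip x y z) D = 0"
proof -
  obtain xs where D_eq: "D = l0_img trip xs"
    using D by (auto simp: L0_root_def L0_def)
  show ?thesis
  proof (cases "\<alpha>3 = (\<lambda>_. 0)")
    case True
    then show ?thesis
      using trip_zero_if_third_weight_zero[OF True x y z] by (simp add: D_eq)
  next
    case False
    with in_class(3) have \<alpha>3: "\<alpha>3 \<in> C"
      by simp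
    have class_zero: "br_TL0 w D = 0" if "\<beta> \<in> C" "w \<in> T_root scale H \<beta>" for \<beta> w
      using br_TL0_class_nonclass_zero[OF that(1) nonclass that(2) D] .
    have weight_zero: "br_TL0 w D \<in> T_root scale H \<epsilon>" if "w \<in> T_root scale H (\<lambda>_. 0)" for w
      using br_TL0_in_T_root[OF H_L0 D that] by simp
    have "trip (snd D x) y z = 0"
      using weight_class_cases(1)[OF False]
    proof
      assume "\<alpha>1 = (\<lambda>_. 0) \<and> \<alpha>2 \<in> C"
      with x weight_zero have "snd D x \<in> T_root scale H \<epsilon>"
        by auto
      from br_TT_class_nonclass_zero(2)[OF _ nonclass y this] \<open>\<alpha>1 = (\<lambda>_. 0) \<and> \<alpha>2 \<in> C\<close>
      show ?thesis
        by (simp add: br_TT_eq_zero_iff)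
    qed (use class_zero x in simp)
    moreover have "trip x (snd D y) z = 0"
      using weight_class_cases(2)[OF False]
    proof
      assume "\<alpha>2 = (\<lambda>_. 0) \<and> \<alpha>1 \<in> C"
      with y weight_zero have "snd D y \<in> T_root scale H \<epsilon>"
        by auto
      from br_TT_class_nonclass_zero(1)[OF _ nonclass x this] \<open>\<alpha>2 = (\<lambda>_. 0) \<and> \<alpha>1 \<in> C\<close>
      show ?thesis
        by (simp add: br_TT_eq_zero_iff)
    qed (use class_zero y in simp)
    moreover have "snd D z = 0"
      using class_zero[OF \<alpha>3 z] by simp
    ultimately show ?thesis
      by (simp add: D_eq snd_l0_img_derivation)
  qed
qed

lemma br_L0T_trip_T0_nonclass_zero:
  assumes x: "x \<in> T_root scale H \<alpha>1" and y: "y \<in> T_root scale H \<alpha>2"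
    and z: "z \<in> T_root scale H \<alpha>3" and t: "t \<in> T_root scale H (\<lambda>_. 0)"
    and e: "e \<in> T_root scale H \<epsilon>"
  shows "br_L0T (br_TT trip (trip x y z) t) e = 0"
proof -
  have "trip (trip x y z) e t = 0"
    using br_TT_trip_nonclass_zero[OF x y z e] by (simp add: br_TT_eq_zero_iff)
  moreover have "br_TT trip t e \<in> L0_root scale trip H \<epsilon>"
    using br_TT_in_L0_root[OF H_L0 t e] by simp
  from br_TL0_trip_nonclass_zero[OF x y z this] have "ract t e (trip x y z) = 0"
    by simp
  ultimately show ?thesis
    by (simp add: ract_def)
qed

end

end

theorem lemma3p5:
  fixes scale :: "'k::field \<Rightarrow> 'v::ab_group_add \<Rightarrow> 'v"
    and trip :: "'v \<Rightarrow> 'v \<Rightarrow> 'v \<Rightarrow> 'v"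
    and H :: "'v L0elem set"
    and \<alpha>0 \<alpha>1 \<alpha>2 \<alpha>3 \<epsilon> :: "'v L0elem \<Rightarrow> 'k"
  assumes lts: "leibniz_triple_system scale trip"
    and H: "max_abelian_subalg_L0 scale trip H"
    and split: "split_LTS scale trip H"
    and sym1: "symmetric_roots (Lambda1 scale H)"
    and sym0: "symmetric_roots (Lambda0 scale trip H)"
    and a0: "\<alpha>0 \<in> Lambda1 scale H"
    and a1: "\<alpha>1 \<in> connected_class (Lambda1 scale H) (Lambda0 scale trip H) \<alpha>0 \<union> {(\<lambda>_. 0)}"
    and a2: "\<alpha>2 \<in> connected_class (Lambda1 scale H) (Lambda0 scale trip H) \<alpha>0 \<union> {(\<lambda>_. 0)}"
    and a3: "\<alpha>3 \<in> connected_class (Lambda1 scale H) (Lambda0 scale trip H) \<alpha>0 \<union> {(\<lambda>_. 0)}"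
    and sum0: "\<And>h. \<alpha>1 h + \<alpha>2 h + \<alpha>3 h = 0"
    and eps: "\<epsilon> \<in> Lambda1 scale H - connected_class (Lambda1 scale H) (Lambda0 scale trip H) \<alpha>0"
  shows
    "(\<forall>x\<in>T_root scale H \<alpha>1. \<forall>y\<in>T_root scale H \<alpha>2. \<forall>z\<in>T_root scale H \<alpha>3.
        \<forall>e\<in>T_root scale H \<epsilon>. br_TT trip (trip x y z) e = l0_zero)
   \<and> (\<epsilon> \<in> Lambda0 scale trip H \<longrightarrow>
       (\<forall>x\<in>T_root scale H \<alpha>1. \<forall>y\<in>T_root scale H \<alpha>2. \<forall>z\<in>T_root scale H \<alpha>3.
          \<forall>D\<in>L0_root scale trip H \<epsilon>. br_TL0 (trip x y z) D = 0))
   \<and> (\<forall>x\<in>T_root scale H \<alpha>1. \<forall>y\<in>T_root scale H \<alpha>2. \<forall>z\<in>T_root scale H \<alpha>3.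
        \<forall>t\<in>T_root scale H (\<lambda>_. 0). \<forall>e\<in>T_root scale H \<epsilon>.
          br_L0T (br_TT trip (trip x y z) t) e = 0)"
proof -
  have "H \<subseteq> L0 trip"
    using H by (simp add: max_abelian_subalg_L0_def abelian_subalg_L0_def)
  then interpret split_lts scale trip H \<alpha>0
    using lts split sym1 sym0 by unfold_locales
  show ?thesis
    using br_TT_trip_nonclass_zero[OF a1 a2 a3 sum0 eps]
      br_TL0_trip_nonclass_zero[OF a1 a2 a3 sum0 eps]
      br_L0T_trip_T0_nonclass_zero[OF a1 a2 a3 sum0 eps]
    by blast
qed

end
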